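(* Let $L\ge2$ and $0\le p<1$, and let $(\eta_n)_{n\ge0}$ be the Markov chain on $\{0,1\}^L$ with transition function $Q$, started from the stationary distribution $\pi(\omega)=Z^{-1}\prod_{j=0}^{|\omega|-1}c_j/c_{L-j-1}$. Define $\rho_n=\mathbb E_\pi[\eta_0(0)\eta_n(0)]$ and $\bar\rho_n=\rho_n-\frac14$. Then $\rho_0=\frac12$, $\rho_1=\rho_2=\dots=\rho_{L-1}$, for every $n\ge L$ $$\bar\rho_n=\frac{2p-1}{L}\sum_{j=1}^L\bar\rho_{n-j},$$ and $\bar\rho_n\to0$ exponentially fast as $n\to\infty$ (i.e. $|\bar\rho_n|\le Cr^n$ for some $C<\infty$, $r<1$).
   Context: $\Omega=\{0,1\}^L$, $\omega=(\omega(0),\dots,\omega(L-1))$, $|\omega|=\sum_j\omega(j)$. The transition function $Q$ is $Q\big(\eta,(\eta(1),\dots,\eta(L-1),s)\big)=\frac1L\big(|\eta|p+(L-|\eta|)(1-p)\big)$ for $s=1$, $=\frac1L\big((L-|\eta|)p+|\eta|(1-p)\big)$ for $s=0$, and $Q(\eta,\omega)=0$ otherwise. $c_j=(1-p)(1-\frac jL)+\frac jLp$ and $Z$ is a normalizing constant; this $\pi$ is stationary for $Q$. *)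

theory Defs
  imports Complex_Main
begin

text \<open>State space \<Omega> = {0,1}^L, realised as boolean lists of length L;
  \<omega>(j) is \<open>\<omega> ! j\<close> (True = 1).\<close>

definition Omega :: "nat \<Rightarrow> bool list set" where
  "Omega L = {\<omega>. length \<omega> = L}"

definition weight :: "bool list \<Rightarrow> nat" where
  "weight \<omega> = length (filter id \<omega>)"

definition Qtr :: "nat \<Rightarrow> real \<Rightarrow> bool list \<Rightarrow> bool list \<Rightarrow> real" where
  "Qtr L p \<eta> \<omega> =
     (if \<omega> = tl \<eta> @ [True] then
        (real (weight \<eta>) * p + (real L - real (weight \<eta>)) * (1 - p)) / real L
      else if \<omega> = tl \<eta> @ [False] then
        ((real L - real (weight \<eta>)) * p + real (weight \<eta>) * (1 - p)) / real L
      else 0)"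

fun Qn :: "nat \<Rightarrow> real \<Rightarrow> nat \<Rightarrow> bool list \<Rightarrow> bool list \<Rightarrow> real" where
  "Qn L p 0 \<eta> \<omega> = (if \<eta> = \<omega> then 1 else 0)"
| "Qn L p (Suc n) \<eta> \<omega> = (\<Sum>\<xi>\<in>Omega L. Qn L p n \<eta> \<xi> * Qtr L p \<xi> \<omega>)"

definition cc :: "nat \<Rightarrow> real \<Rightarrow> nat \<Rightarrow> real" where
  "cc L p j = (1 - p) * (1 - real j / real L) + real j / real L * p"

definition piw :: "nat \<Rightarrow> real \<Rightarrow> bool list \<Rightarrow> real" where
  "piw L p \<omega> = (\<Prod>j<weight \<omega>. cc L p j / cc L p (L - j - 1))"

definition Zc :: "nat \<Rightarrow> real \<Rightarrow> real" where
  "Zc L p = (\<Sum>\<omega>\<in>Omega L. piw L p \<omega>)"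

definition stat :: "nat \<Rightarrow> real \<Rightarrow> bool list \<Rightarrow> real" where
  "stat L p \<omega> = piw L p \<omega> / Zc L p"

definition rho :: "nat \<Rightarrow> real \<Rightarrow> nat \<Rightarrow> real" where
  "rho L p n = (\<Sum>\<eta>\<in>Omega L. \<Sum>\<omega>\<in>Omega L.
      stat L p \<eta> * Qn L p n \<eta> \<omega> * of_bool (\<eta> ! 0) * of_bool (\<omega> ! 0))"

definition rhobar :: "nat \<Rightarrow> real \<Rightarrow> nat \<Rightarrow> real" where
  "rhobar L p n = rho L p n - 1/4"

end

theory Submission
  imports Defs "HOL-Library.Multiset"
begin

text \<open>Each step of the chain shifts the configuration one site to the left and appends a site
  that is occupied with probability \<open>(1 - p) + (2p - 1)|\<eta>|/L\<close>. Hence \<open>\<eta>\<^sub>n(i) = \<eta>\<^sub>n\<^sub>+\<^sub>i(0)\<close> for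
  \<open>i < L\<close>, and conditioning on the step that created site \<open>L - 1\<close> of \<open>\<eta>\<^sub>n\<^sub>-\<^sub>L\<^sub>+\<^sub>1\<close> expresses \<open>\<rho>\<^sub>n\<close>
  through \<open>\<rho>\<^sub>n\<^sub>-\<^sub>L, \<dots>, \<rho>\<^sub>n\<^sub>-\<^sub>1\<close>; this is the recurrence. The weight \<open>\<pi>\<close> depends only on \<open>|\<omega>|\<close> and is
  invariant under flipping every site, which gives \<open>\<rho>\<^sub>0 = E\<^sub>\<pi>[\<eta>\<^sub>0(0)] = 1/2\<close> and the equality
  of \<open>\<rho>\<^sub>1, \<dots>, \<rho>\<^sub>L\<^sub>-\<^sub>1\<close>.

  The recurrence \<open>x\<^sub>n = (a/L)(x\<^sub>n\<^sub>-\<^sub>1 + \<dots> + x\<^sub>n\<^sub>-\<^sub>L)\<close> with \<open>a = 2p - 1 \<in> [-1, 1)\<close> decays exponentially: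
  for \<open>|a| < 1\<close> the maximum over the last \<open>L\<close> values contracts by \<open>|a|\<close> every \<open>L\<close> steps. For
  \<open>a = -1\<close> one has \<open>x\<^sub>n\<^sub>+\<^sub>1 = (1 - 1/L) x\<^sub>n + (1/L) x\<^sub>n\<^sub>-\<^sub>L\<close>, a convex averaging under which the
  oscillation over consecutive windows of length \<open>L + 1\<close> contracts by \<open>1 - (1 - 1/L)\<^sup>L/2\<close>, and
  every such window contains values of both signs.\<close>

section \<open>The stationary weight\<close>

lemma finite_Omega: "finite (Omega L)"
  unfolding Omega_def using finite_lists_length_eq[of "UNIV :: bool set" L] by simp

lemma weight_eq_sum_nth: "real (weight \<omega>) = (\<Sum>i<length \<omega>. of_bool (\<omega> ! i))"
proof -
  have "{..<length \<omega>} \<inter> {i. \<omega> ! i} = {i. i < length \<omega> \<and> \<omega> ! i}" by auto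
  then show ?thesis unfolding weight_def length_filter_conv_card by simp
qed

lemma weight_le_length: "weight \<omega> \<le> length \<omega>"
  unfolding weight_def by simp

lemma weight_map_Not: "weight (map Not \<omega>) = length \<omega> - weight \<omega>"
proof -
  have "filter id (map Not \<omega>) = map Not (filter Not \<omega>)" by (induction \<omega>) auto
  then show ?thesis
    using sum_length_filter_compl[of id \<omega>] unfolding weight_def by simp
qed

lemma prod_ratio_reflect:
  fixes c :: "nat \<Rightarrow> real"
  assumes nonzero: "\<And>j. j < L \<Longrightarrow> c j \<noteq> 0" and "w \<le> L"
  shows "(\<Prod>j<w. c j / c (L - j - 1)) = (\<Prod>j<L - w. c j / c (L - j - 1))"
proof -
  define r where "r j = c j / c (L - j - 1)" for j
  have "(\<Prod>j<L. r j) = (\<Prod>j<L. c j) / (\<Prod>j<L. c (L - Suc j))"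
    unfolding r_def by (simp add: prod_dividef)
  also have "\<dots> = 1"
    using nonzero by (simp add: sum.nat_diff_reindex prod.nat_diff_reindex prod_zero_iff)
  finally have total: "(\<Prod>j<L. r j) = 1" .
  have "(\<Prod>j\<in>{w..<L}. r j) = (\<Prod>j<L - w. r (w + j))"
    by (simp add: prod.atLeastLessThan_shift_0 atLeast0LessThan comp_def)
  also have "\<dots> = (\<Prod>j<L - w. r (w + (L - w - Suc j)))"
    by (rule prod.nat_diff_reindex[symmetric])
  also have "\<dots> = (\<Prod>j<L - w. inverse (r j))"
    using \<open>w \<le> L\<close> nonzero by (intro prod.cong) (auto simp: r_def Suc_diff_Suc)
  also have "\<dots> = inverse (\<Prod>j<L - w. r j)"
    using prod_inversef[of r] by (simp add: comp_def)
  finally have "(\<Prod>j<w. r j) * inverse (\<Prod>j<L - w. r j) = 1"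
    using total prod.atLeastLessThan_concat[of 0 w L r] \<open>w \<le> L\<close>
    by (simp add: atLeast0LessThan prod_inversef)
  then show ?thesis unfolding r_def by (simp add: field_simps split: if_splits)
qed

lemma cc_pos:
  assumes "0 \<le> p" "p < 1" "k < L"
  shows "cc L p k > 0"
proof -
  have "(1 - p) * (1 - real k / real L) > 0" using assms by simp
  moreover have "real k / real L * p \<ge> 0" using assms by simp
  ultimately show ?thesis unfolding cc_def by linarith
qed

lemma piw_pos:
  assumes "0 \<le> p" "p < 1" "\<omega> \<in> Omega L"
  shows "piw L p \<omega> > 0"
  unfolding piw_def
proof (rule prod_pos)
  fix j assume "j \<in> {..<weight \<omega>}"
  then have "j < L" using weight_le_length[of \<omega>] assms(3) by (auto simp: Omega_def)
  then show "0 < cc L p j / cc L p (L - j - 1)" using cc_pos[OF assms(1,2)] by simp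
qed

lemma sum_stat:
  assumes "0 \<le> p" "p < 1"
  shows "(\<Sum>\<omega>\<in>Omega L. stat L p \<omega>) = 1"
proof -
  have "replicate L False \<in> Omega L" by (simp add: Omega_def)
  then have "Zc L p > 0"
    unfolding Zc_def using piw_pos[OF assms] finite_Omega by (intro sum_pos) auto
  then show ?thesis unfolding stat_def Zc_def by (simp add: sum_divide_distrib[symmetric])
qed

lemma stat_map_Not:
  assumes "0 \<le> p" "p < 1" "\<omega> \<in> Omega L"
  shows "stat L p (map Not \<omega>) = stat L p \<omega>"
proof -
  have "length \<omega> = L" using assms(3) by (simp add: Omega_def)
  moreover have "\<And>j. j < L \<Longrightarrow> cc L p j \<noteq> 0" using cc_pos[OF assms(1,2)] by (metis less_irrefl)
  ultimately have "piw L p (map Not \<omega>) = piw L p \<omega>"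
    unfolding piw_def weight_map_Not using prod_ratio_reflect weight_le_length by metis
  then show ?thesis unfolding stat_def by simp
qed

lemma stat_cong_weight: "weight \<omega> = weight \<omega>' \<Longrightarrow> stat L p \<omega> = stat L p \<omega>'"
  unfolding stat_def piw_def by simp

lemma sum_stat_first_site:
  assumes "0 \<le> p" "p < 1" "L > 0"
  shows "(\<Sum>\<omega>\<in>Omega L. stat L p \<omega> * of_bool (\<omega> ! 0)) = 1/2"
proof -
  let ?occ = "\<lambda>b. \<Sum>\<omega>\<in>Omega L. stat L p \<omega> * of_bool (\<omega> ! 0 = b)"
  have "?occ True = ?occ False"
    by (rule sum.reindex_bij_witness[of _ "map Not" "map Not"])
      (use \<open>L > 0\<close> in \<open>auto simp: Omega_def stat_map_Not[OF assms(1,2)] comp_def\<close>)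
  moreover have "?occ True + ?occ False = 1"
  proof -
    have "\<And>\<omega>. stat L p \<omega> * of_bool (\<omega> ! 0 = True) + stat L p \<omega> * of_bool (\<omega> ! 0 = False) = stat L p \<omega>"
      by simp
    then show ?thesis using sum_stat[OF assms(1,2)] by (simp only: sum.distrib[symmetric])
  qed
  ultimately show ?thesis by simp
qed

lemma sum_stat_pair_exchange:
  assumes "0 < i" "i < L" "0 < j" "j < L"
  shows "(\<Sum>\<omega>\<in>Omega L. stat L p \<omega> * of_bool (\<omega> ! 0) * of_bool (\<omega> ! i))
       = (\<Sum>\<omega>\<in>Omega L. stat L p \<omega> * of_bool (\<omega> ! 0) * of_bool (\<omega> ! j))"
proof -
  define swap where "swap \<omega> = \<omega>[i := \<omega> ! j, j := \<omega> ! i]" for \<omega> :: "bool list"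
  have swap: "swap (swap \<omega>) = \<omega>" "swap \<omega> \<in> Omega L"
    and swap_summand: "stat L p (swap \<omega>) * of_bool (swap \<omega> ! 0) * of_bool (swap \<omega> ! j)
        = stat L p \<omega> * of_bool (\<omega> ! 0) * of_bool (\<omega> ! i)"
    if "\<omega> \<in> Omega L" for \<omega>
  proof -
    have len: "length \<omega> = L" using that by (simp add: Omega_def)
    then show "swap (swap \<omega>) = \<omega>" "swap \<omega> \<in> Omega L"
      unfolding swap_def using assms
      by (auto simp: Omega_def list_eq_iff_nth_eq nth_list_update)
    have "mset (swap \<omega>) = mset \<omega>"
      unfolding swap_def using mset_swap[of j \<omega> i] assms len by simp
    then have "weight (swap \<omega>) = weight \<omega>"
      unfolding weight_def by (metis mset_filter size_mset)
    then have "stat L p (swap \<omega>) = stat L p \<omega>" by (rule stat_cong_weight)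
    moreover have "swap \<omega> ! 0 = \<omega> ! 0" "swap \<omega> ! j = \<omega> ! i"
      unfolding swap_def using assms len by (simp_all add: nth_list_update)
    ultimately show "stat L p (swap \<omega>) * of_bool (swap \<omega> ! 0) * of_bool (swap \<omega> ! j)
        = stat L p \<omega> * of_bool (\<omega> ! 0) * of_bool (\<omega> ! i)"
      by simp
  qed
  show ?thesis
    by (rule sum.reindex_bij_witness[of _ swap swap]) (simp_all add: swap swap_summand)
qed

section \<open>One step of the chain\<close>

definition prob_new_one :: "nat \<Rightarrow> real \<Rightarrow> bool list \<Rightarrow> real" where
  "prob_new_one L p \<eta> = (real (weight \<eta>) * p + (real L - real (weight \<eta>)) * (1 - p)) / real L"

lemma prob_new_one_eq_sum_nth:
  assumes "\<eta> \<in> Omega L" "L > 0"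
  shows "prob_new_one L p \<eta> = (1 - p) + (2 * p - 1) / real L * (\<Sum>i<L. of_bool (\<eta> ! i))"
  using assms weight_eq_sum_nth[of \<eta>]
  by (simp add: prob_new_one_def Omega_def field_simps)

lemma sum_Qtr:
  assumes "\<eta> \<in> Omega L" "L > 0"
  shows "(\<Sum>\<omega>\<in>Omega L. Qtr L p \<eta> \<omega> * f \<omega>)
       = prob_new_one L p \<eta> * f (tl \<eta> @ [True]) + (1 - prob_new_one L p \<eta>) * f (tl \<eta> @ [False])"
proof -
  let ?one = "tl \<eta> @ [True]" and ?zero = "tl \<eta> @ [False]"
  have "Qtr L p \<eta> \<omega> * f \<omega>
      = (if \<omega> = ?one then prob_new_one L p \<eta> * f ?one else 0)
      + (if \<omega> = ?zero then (1 - prob_new_one L p \<eta>) * f ?zero else 0)" for \<omega>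
    using \<open>L > 0\<close> by (auto simp: Qtr_def prob_new_one_def field_simps)
  moreover have "?one \<in> Omega L" "?zero \<in> Omega L" using assms by (auto simp: Omega_def)
  ultimately show ?thesis by (simp add: sum.distrib finite_Omega)
qed

text \<open>\<open>occ_law L p n \<omega>\<close> is \<open>E\<^sub>\<pi>[\<eta>\<^sub>0(0); \<eta>\<^sub>n = \<omega>]\<close>, and \<open>corr L p n i\<close> is \<open>E\<^sub>\<pi>[\<eta>\<^sub>0(0) \<eta>\<^sub>n(i)]\<close>.\<close>

definition occ_law :: "nat \<Rightarrow> real \<Rightarrow> nat \<Rightarrow> bool list \<Rightarrow> real" where
  "occ_law L p n \<omega> = (\<Sum>\<eta>\<in>Omega L. stat L p \<eta> * of_bool (\<eta> ! 0) * Qn L p n \<eta> \<omega>)"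

definition corr :: "nat \<Rightarrow> real \<Rightarrow> nat \<Rightarrow> nat \<Rightarrow> real" where
  "corr L p n i = (\<Sum>\<omega>\<in>Omega L. occ_law L p n \<omega> * of_bool (\<omega> ! i))"

lemma rho_eq_corr: "rho L p n = corr L p n 0"
  unfolding rho_def corr_def occ_law_def sum_distrib_right
  by (subst sum.swap) (simp add: mult_ac)

lemma occ_law_0: "\<omega> \<in> Omega L \<Longrightarrow> occ_law L p 0 \<omega> = stat L p \<omega> * of_bool (\<omega> ! 0)"
  unfolding occ_law_def by (simp add: finite_Omega if_distrib cong: if_cong)

lemma corr_0: "corr L p 0 i = (\<Sum>\<omega>\<in>Omega L. stat L p \<omega> * of_bool (\<omega> ! 0) * of_bool (\<omega> ! i))"
  unfolding corr_def by (rule sum.cong) (simp_all add: occ_law_0)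

lemma sum_occ_law_Suc:
  assumes "L > 0"
  shows "(\<Sum>\<omega>\<in>Omega L. occ_law L p (Suc n) \<omega> * f \<omega>)
    = (\<Sum>\<eta>\<in>Omega L. occ_law L p n \<eta> *
        (prob_new_one L p \<eta> * f (tl \<eta> @ [True]) + (1 - prob_new_one L p \<eta>) * f (tl \<eta> @ [False])))"
proof -
  have "occ_law L p (Suc n) \<omega> = (\<Sum>\<eta>\<in>Omega L. occ_law L p n \<eta> * Qtr L p \<eta> \<omega>)" for \<omega>
    unfolding occ_law_def Qn.simps sum_distrib_left sum_distrib_right
    by (subst sum.swap) (simp add: mult_ac)
  then have "(\<Sum>\<omega>\<in>Omega L. occ_law L p (Suc n) \<omega> * f \<omega>)
      = (\<Sum>\<omega>\<in>Omega L. \<Sum>\<eta>\<in>Omega L. occ_law L p n \<eta> * (Qtr L p \<eta> \<omega> * f \<omega>))"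
    by (simp add: sum_distrib_right mult.assoc)
  also have "\<dots> = (\<Sum>\<eta>\<in>Omega L. occ_law L p n \<eta> * (\<Sum>\<omega>\<in>Omega L. Qtr L p \<eta> \<omega> * f \<omega>))"
    by (subst sum.swap) (simp add: sum_distrib_left)
  finally
  show ?thesis using sum_Qtr[OF _ assms] by simp
qed

lemma sum_occ_law:
  assumes "0 \<le> p" "p < 1" "L > 0"
  shows "(\<Sum>\<omega>\<in>Omega L. occ_law L p n \<omega>) = 1/2"
proof (induction n)
  case 0
  then show ?case
    using sum_stat_first_site[OF assms] by (simp add: occ_law_0 cong: sum.cong)
next
  case (Suc n)
  then show ?case
    using sum_occ_law_Suc[OF assms(3), of p n "\<lambda>_. 1"] by simp
qed

lemma corr_Suc:
  assumes "Suc i < L"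
  shows "corr L p (Suc n) i = corr L p n (Suc i)"
proof -
  have "(tl \<eta> @ [b]) ! i = \<eta> ! Suc i" if "\<eta> \<in> Omega L" for \<eta> b
  proof -
    have "i < length (tl \<eta>)" using that assms by (simp add: Omega_def)
    then show ?thesis by (simp add: nth_append nth_tl)
  qed
  then show ?thesis
    unfolding corr_def sum_occ_law_Suc[OF order.strict_trans[OF zero_less_Suc assms]]
    by (intro sum.cong) (simp_all add: algebra_simps)
qed

lemma corr_eq_rho:
  assumes "i < L"
  shows "corr L p n i = rho L p (n + i)"
  using assms
proof (induction i arbitrary: n)
  case 0
  then show ?case by (simp add: rho_eq_corr)
next
  case (Suc i)
  then show ?case using corr_Suc[of i L p n] by simp
qed

lemma corr_Suc_last:
  assumes "0 \<le> p" "p < 1" "L > 0"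
  shows "corr L p (Suc n) (L - 1) = (1 - p) / 2 + (2 * p - 1) / real L * (\<Sum>i<L. corr L p n i)"
proof -
  have "corr L p (Suc n) (L - 1) = (\<Sum>\<eta>\<in>Omega L. occ_law L p n \<eta> * prob_new_one L p \<eta>)"
    unfolding corr_def sum_occ_law_Suc[OF assms(3)]
    by (intro sum.cong) (auto simp: Omega_def nth_append)
  also have "\<dots> = (\<Sum>\<eta>\<in>Omega L. (1 - p) * occ_law L p n \<eta>
      + (2 * p - 1) / real L * (\<Sum>i<L. occ_law L p n \<eta> * of_bool (\<eta> ! i)))"
  proof (rule sum.cong[OF refl])
    fix \<eta> assume \<eta>: "\<eta> \<in> Omega L"
    define S where "S = (\<Sum>i<L. of_bool (\<eta> ! i) :: real)"
    have factor: "(\<Sum>i<L. occ_law L p n \<eta> * of_bool (\<eta> ! i)) = occ_law L p n \<eta> * S"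
      unfolding S_def by (rule sum_distrib_left[symmetric])
    show "occ_law L p n \<eta> * prob_new_one L p \<eta> = (1 - p) * occ_law L p n \<eta>
        + (2 * p - 1) / real L * (\<Sum>i<L. occ_law L p n \<eta> * of_bool (\<eta> ! i))"
      unfolding prob_new_one_eq_sum_nth[OF \<eta> assms(3)] S_def[symmetric] factor
      by (simp add: algebra_simps)
  qed
  also have "\<dots> = (1 - p) * (\<Sum>\<eta>\<in>Omega L. occ_law L p n \<eta>)
      + (2 * p - 1) / real L * (\<Sum>i<L. corr L p n i)"
    unfolding corr_def sum.distrib sum_distrib_left[symmetric] by (subst sum.swap) (simp add: mult.commute)
  finally show ?thesis using sum_occ_law[OF assms] by simp
qed

section \<open>Exponential decay of averaging recurrences\<close>

lemma exp_decay_of_block_decay: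
  fixes x :: "nat \<Rightarrow> real"
  assumes "K > 0" "0 < \<theta>" "\<theta> < 1" and block: "\<And>k. \<bar>x k\<bar> \<le> B * \<theta> ^ (k div K)"
  shows "\<exists>C r. 0 \<le> r \<and> r < 1 \<and> (\<forall>n. \<bar>x n\<bar> \<le> C * r ^ n)"
proof (intro exI conjI allI)
  define r where "r = root K \<theta>"
  show "0 \<le> r" "r < 1" using assms unfolding r_def by simp_all
  fix n
  have rK: "r ^ K = \<theta>" unfolding r_def using assms by (simp add: real_root_pow_pos2)
  have "\<theta> ^ (n div K) * \<theta> \<le> \<theta> ^ (n div K) * r ^ (n mod K)"
    unfolding rK[symmetric] using \<open>0 \<le> r\<close> \<open>r < 1\<close> \<open>K > 0\<close> \<open>0 < \<theta>\<close>
    by (intro mult_left_mono power_decreasing) simp_all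
  also have "\<dots> = (r ^ K) ^ (n div K) * r ^ (n mod K)" by (simp only: rK)
  also have "\<dots> = r ^ (K * (n div K) + n mod K)" by (simp only: power_add power_mult)
  also have "\<dots> = r ^ n" by simp
  finally have "\<theta> ^ (n div K) \<le> r ^ n / \<theta>" using \<open>0 < \<theta>\<close> by (simp add: field_simps)
  moreover have "0 \<le> B" using block[of 0] abs_ge_zero[of "x 0"] by simp
  ultimately have "B * \<theta> ^ (n div K) \<le> B * (r ^ n / \<theta>)" by (rule mult_left_mono)
  then show "\<bar>x n\<bar> \<le> B / \<theta> * r ^ n" using block[of n] by simp
qed

lemma abs_le_of_window_bound:
  fixes x :: "nat \<Rightarrow> real"
  assumes "L > 0" and rec: "x k = a / real L * (\<Sum>j=1..L. x (k - j))"
    and bound: "\<And>j. j \<in> {1..L} \<Longrightarrow> \<bar>x (k - j)\<bar> \<le> B"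
  shows "\<bar>x k\<bar> \<le> \<bar>a\<bar> * B"
proof -
  have "\<bar>\<Sum>j=1..L. x (k - j)\<bar> \<le> (\<Sum>j=1..L. B)"
    using bound by (intro order_trans[OF sum_abs] sum_mono)
  then have "\<bar>\<Sum>j=1..L. x (k - j)\<bar> \<le> real L * B" by simp
  then have "\<bar>a\<bar> / real L * \<bar>\<Sum>j=1..L. x (k - j)\<bar> \<le> \<bar>a\<bar> / real L * (real L * B)"
    by (intro mult_left_mono) simp_all
  then show ?thesis using \<open>L > 0\<close> by (subst rec) (simp add: abs_mult)
qed

lemma exp_decay_of_contractive_recurrence:
  fixes x :: "nat \<Rightarrow> real"
  assumes "L > 0" "\<bar>a\<bar> < 1"
    and rec: "\<And>n. n \<ge> L \<Longrightarrow> x n = a / real L * (\<Sum>j=1..L. x (n - j))"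
  shows "\<exists>C r. 0 \<le> r \<and> r < 1 \<and> (\<forall>n. \<bar>x n\<bar> \<le> C * r ^ n)"
proof -
  define \<theta> where "\<theta> = max \<bar>a\<bar> (1/2)"
  have \<theta>: "0 < \<theta>" "\<theta> < 1" "\<bar>a\<bar> \<le> \<theta>" using assms(2) by (auto simp: \<theta>_def)
  define B where "B = (\<Sum>k<L. \<bar>x k\<bar>)"
  have "\<bar>x k\<bar> \<le> B * \<theta> ^ (k div L)" for k
  proof (induction k rule: less_induct)
    case (less k)
    show ?case
    proof (cases "k < L")
      case True
      then show ?thesis
        unfolding B_def using member_le_sum[of k "{..<L}" "\<lambda>k. \<bar>x k\<bar>"] by simp
    next
      case False
      have "\<bar>x (k - j)\<bar> \<le> B * \<theta> ^ (k div L - 1)" if "j \<in> {1..L}" for j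
      proof -
        have "k div L - 1 \<le> (k - j) div L"
          using that False div_le_mono[OF diff_le_mono2[of j L k], of L] \<open>L > 0\<close>
          by (simp add: le_div_geq)
        then have "\<theta> ^ ((k - j) div L) \<le> \<theta> ^ (k div L - 1)"
          using \<theta> by (intro power_decreasing) simp_all
        moreover have "0 \<le> B" unfolding B_def by (simp add: sum_nonneg)
        moreover have "k - j < k" using that False \<open>L > 0\<close> by simp
        ultimately show ?thesis using less[of "k - j"] by (meson mult_left_mono order_trans)
      qed
      then have "\<bar>x k\<bar> \<le> \<bar>a\<bar> * (B * \<theta> ^ (k div L - 1))"
        using False \<open>L > 0\<close> rec by (intro abs_le_of_window_bound) auto
      also have "\<dots> \<le> \<theta> * (B * \<theta> ^ (k div L - 1))"
        using \<theta> by (intro mult_right_mono) (auto simp: B_def sum_nonneg)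
      also have "\<dots> = B * \<theta> ^ (k div L)"
        using False \<open>L > 0\<close> by (simp add: power_eq_if le_div_geq)
      finally show ?thesis .
    qed
  qed
  then show ?thesis using exp_decay_of_block_decay[OF \<open>L > 0\<close> \<theta>(1,2)] by blast
qed

lemma window_sum_Suc:
  fixes x :: "nat \<Rightarrow> 'a :: comm_monoid_add"
  assumes "L \<le> k"
  shows "(\<Sum>j=1..L. x (Suc k - j)) + x (k - L) = (\<Sum>j=1..L. x (k - j)) + x k"
proof -
  have "(\<Sum>j=1..L. x (Suc k - j)) + x (k - L) = (\<Sum>i<Suc L. x (k - i))"
    by (simp add: sum.atLeast1_atMost_eq)
  also have "\<dots> = (\<Sum>j=1..L. x (k - j)) + x k"
    unfolding sum.lessThan_Suc_shift by (simp add: sum.atLeast1_atMost_eq add.commute)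
  finally show ?thesis .
qed

locale delay_average =
  fixes x :: "nat \<Rightarrow> real" and L :: nat and \<alpha> :: real
  assumes delay_rec: "\<And>k. L \<le> k \<Longrightarrow> x (Suc k) = \<alpha> * x k + (1 - \<alpha>) * x (k - L)"
    and alpha_nonneg: "0 \<le> \<alpha>" and alpha_le_one: "\<alpha> \<le> 1"
begin

lemma range_invariant:
  assumes window: "\<And>k. n \<le> k \<Longrightarrow> k \<le> n + L \<Longrightarrow> m \<le> x k \<and> x k \<le> M"
  shows "n \<le> k \<Longrightarrow> m \<le> x k \<and> x k \<le> M"
proof (induction k rule: less_induct)
  case (less k)
  show ?case
  proof (cases "k \<le> n + L")
    case True
    then show ?thesis using window less.prems by simp
  next
    case False
    then obtain k' where k: "k = Suc k'" and "n + L \<le> k'" by (cases k) auto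
    then have "L \<le> k'" by simp
    from k \<open>n + L \<le> k'\<close> have "m \<le> x k' \<and> x k' \<le> M" "m \<le> x (k' - L) \<and> x (k' - L) \<le> M"
      using less.IH by simp_all
    then have "\<alpha> * m + (1 - \<alpha>) * m \<le> x k \<and> x k \<le> \<alpha> * M + (1 - \<alpha>) * M"
      unfolding k delay_rec[OF \<open>L \<le> k'\<close>]
      using alpha_nonneg alpha_le_one by (intro conjI add_mono mult_left_mono) simp_all
    then show ?thesis by (simp add: algebra_simps)
  qed
qed

lemma lower_bound_after_midpoint:
  assumes window: "\<And>k. n \<le> k \<Longrightarrow> k \<le> n + L \<Longrightarrow> m \<le> x k \<and> x k \<le> M"
    and upper_half: "(m + M) / 2 \<le> x (n + L + 1)"
    and k: "n + L + 1 \<le> k" "k \<le> n + 2 * L + 1"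
  shows "m + \<alpha> ^ L * (M - m) / 2 \<le> x k"
proof -
  have above: "m + \<alpha> ^ i * (x (n + L + 1) - m) \<le> x (n + L + 1 + i)" for i
  proof (induction i)
    case 0
    then show ?case by simp
  next
    case (Suc i)
    have "m \<le> x (n + L + 1 + i - L)" using range_invariant[OF window] by simp
    then have "\<alpha> * (m + \<alpha> ^ i * (x (n + L + 1) - m)) + (1 - \<alpha>) * m \<le> x (n + L + 1 + Suc i)"
      using delay_rec[of "n + L + 1 + i"] Suc alpha_nonneg alpha_le_one
      by (simp add: add_mono mult_left_mono)
    then show ?case by (simp add: algebra_simps)
  qed
  define i where "i = k - (n + L + 1)"
  have "\<alpha> ^ L * ((M - m) / 2) \<le> \<alpha> ^ i * (x (n + L + 1) - m)"
    using window[of n] upper_half k alpha_nonneg alpha_le_one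
    by (intro mult_mono power_decreasing) (simp_all add: i_def)
  then show ?thesis using above[of i] k by (simp add: i_def)
qed

lemma oscillation_step:
  assumes window: "\<And>k. n \<le> k \<Longrightarrow> k \<le> n + L \<Longrightarrow> m \<le> x k \<and> x k \<le> M"
  obtains m' M' where "M' - m' \<le> (1 - \<alpha> ^ L / 2) * (M - m)"
    and "\<And>k. n + L + 1 \<le> k \<Longrightarrow> k \<le> n + 2 * L + 1 \<Longrightarrow> m' \<le> x k \<and> x k \<le> M'"
proof -
  have range: "m \<le> x k \<and> x k \<le> M" if "n \<le> k" for k
    using range_invariant[OF window that] .
  show ?thesis
  proof (cases "(m + M) / 2 \<le> x (n + L + 1)")
    case True
    show ?thesis
    proof (rule that)
      show "M - (m + \<alpha> ^ L * (M - m) / 2) \<le> (1 - \<alpha> ^ L / 2) * (M - m)"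
        by (simp add: algebra_simps)
      fix k assume k: "n + L + 1 \<le> k" "k \<le> n + 2 * L + 1"
      show "m + \<alpha> ^ L * (M - m) / 2 \<le> x k \<and> x k \<le> M"
        using lower_bound_after_midpoint[OF window True k] range[of k] k by simp
    qed
  next
    case False
    interpret neg: delay_average "\<lambda>k. - x k" L \<alpha>
      using delay_rec alpha_nonneg alpha_le_one by unfold_locales simp_all
    show ?thesis
    proof (rule that)
      show "M - \<alpha> ^ L * (M - m) / 2 - m \<le> (1 - \<alpha> ^ L / 2) * (M - m)"
        by (simp add: algebra_simps)
      fix k assume k: "n + L + 1 \<le> k" "k \<le> n + 2 * L + 1"
      have "- M + \<alpha> ^ L * (- m - - M) / 2 \<le> - x k"
        using neg.lower_bound_after_midpoint[of n "- M" "- m", OF _ _ k] window False by fastforce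
      then show "m \<le> x k \<and> x k \<le> M - \<alpha> ^ L * (M - m) / 2"
        using range[of k] k by (simp add: algebra_simps)
    qed
  qed
qed

lemma block_oscillation:
  assumes window: "\<And>k. k \<le> L \<Longrightarrow> m\<^sub>0 \<le> x k \<and> x k \<le> M\<^sub>0"
  shows "\<exists>m M. M - m \<le> (1 - \<alpha> ^ L / 2) ^ j * (M\<^sub>0 - m\<^sub>0)
    \<and> (\<forall>k. j * Suc L \<le> k \<longrightarrow> k \<le> j * Suc L + L \<longrightarrow> m \<le> x k \<and> x k \<le> M)"
proof (induction j)
  case 0
  then show ?case using window by auto
next
  case (Suc j)
  then obtain m M where osc: "M - m \<le> (1 - \<alpha> ^ L / 2) ^ j * (M\<^sub>0 - m\<^sub>0)"
    and window: "\<And>k. j * Suc L \<le> k \<Longrightarrow> k \<le> j * Suc L + L \<Longrightarrow> m \<le> x k \<and> x k \<le> M"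
    by blast
  obtain m' M' where "M' - m' \<le> (1 - \<alpha> ^ L / 2) * (M - m)"
    and "\<And>k. j * Suc L + L + 1 \<le> k \<Longrightarrow> k \<le> j * Suc L + 2 * L + 1 \<Longrightarrow> m' \<le> x k \<and> x k \<le> M'"
    using oscillation_step[OF window] by blast
  moreover have "(1 - \<alpha> ^ L / 2) * (M - m) \<le> (1 - \<alpha> ^ L / 2) ^ Suc j * (M\<^sub>0 - m\<^sub>0)"
  proof -
    have "0 \<le> 1 - \<alpha> ^ L / 2" using alpha_nonneg alpha_le_one power_le_one[of \<alpha> L] by simp
    then show ?thesis using mult_left_mono[OF osc] by (simp add: mult.assoc)
  qed
  ultimately show ?case by (intro exI[of _ m'] exI[of _ M']) auto
qed

end

lemma delay_average_of_window_recurrence: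
  fixes x :: "nat \<Rightarrow> real"
  assumes rec: "\<And>n. n \<ge> L \<Longrightarrow> x n = a / real L * (\<Sum>j=1..L. x (n - j))"
    and "L > 0" "- real L \<le> a" "a \<le> 0"
  shows "delay_average x L (1 + a / real L)"
proof
  fix k assume "L \<le> k"
  have "(\<Sum>j=1..L. x (Suc k - j)) = (\<Sum>j=1..L. x (k - j)) + x k - x (k - L)"
    using window_sum_Suc[OF \<open>L \<le> k\<close>, of x] by (simp add: algebra_simps)
  then have "x (Suc k) = a / real L * ((\<Sum>j=1..L. x (k - j)) + x k - x (k - L))"
    using rec[of "Suc k"] \<open>L \<le> k\<close> by simp
  also have "\<dots> = x k + a / real L * (x k - x (k - L))"
    using rec[OF \<open>L \<le> k\<close>] by (simp add: algebra_simps)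
  finally show "x (Suc k) = (1 + a / real L) * x k + (1 - (1 + a / real L)) * x (k - L)"
    by (simp add: algebra_simps)
qed (use assms(2-4) in \<open>simp_all add: field_simps\<close>)

text \<open>With a nonpositive coefficient the recurrence forbids a window of length \<open>L + 1\<close> whose
  values all have the same strict sign, so the oscillation of a window bounds its values.\<close>

lemma window_recurrence_straddles_zero:
  fixes x :: "nat \<Rightarrow> real"
  assumes rec: "\<And>n. n \<ge> L \<Longrightarrow> x n = a / real L * (\<Sum>j=1..L. x (n - j))"
    and "L > 0" "a \<le> 0"
    and window: "\<And>k. n \<le> k \<Longrightarrow> k \<le> n + L \<Longrightarrow> m \<le> x k \<and> x k \<le> M"
  shows "m \<le> 0 \<and> 0 \<le> M"
proof -
  have in_window: "m \<le> x (n + L - j) \<and> x (n + L - j) \<le> M" if "j \<in> {1..L}" for j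
    using window[of "n + L - j"] that by auto
  define S where "S = (\<Sum>j=1..L. x (n + L - j))"
  have "real L * m \<le> S" "S \<le> real L * M"
    unfolding S_def using sum_mono[of "{1..L}" "\<lambda>_. m"] sum_mono[of "{1..L}" _ "\<lambda>_. M"] in_window
    by auto
  then have "a * (real L * M) \<le> a * S" "a * S \<le> a * (real L * m)"
    using \<open>a \<le> 0\<close> by (simp_all add: mult_left_mono_neg)
  moreover have "x (n + L) = a * S / real L" using rec[of "n + L"] unfolding S_def by simp
  ultimately have "a * M * real L \<le> x (n + L) * real L" "x (n + L) * real L \<le> a * m * real L"
    using \<open>L > 0\<close> by (simp_all add: algebra_simps)
  then have "a * M \<le> x (n + L)" "x (n + L) \<le> a * m"
    using \<open>L > 0\<close> by simp_all
  then have "m \<le> a * m" "M * a \<le> M" using window[of "n + L"] by (simp_all add: mult.commute)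
  then show ?thesis
    using \<open>a \<le> 0\<close> by (smt (verit) mult_nonneg_nonpos mult_nonneg_nonpos2 mult_nonpos_nonpos)
qed

lemma exp_decay_of_nonpositive_recurrence:
  fixes x :: "nat \<Rightarrow> real"
  assumes rec: "\<And>n. n \<ge> L \<Longrightarrow> x n = a / real L * (\<Sum>j=1..L. x (n - j))"
    and "L > 0" "- real L < a" "a \<le> 0"
  shows "\<exists>C r. 0 \<le> r \<and> r < 1 \<and> (\<forall>n. \<bar>x n\<bar> \<le> C * r ^ n)"
proof -
  define \<alpha> where "\<alpha> = 1 + a / real L"
  have \<alpha>: "0 < \<alpha>" "\<alpha> \<le> 1" using assms(2-4) by (simp_all add: \<alpha>_def field_simps)
  interpret delay_average x L \<alpha>
    unfolding \<alpha>_def using delay_average_of_window_recurrence[OF rec] assms(2-4) by simp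
  define \<theta> where "\<theta> = 1 - \<alpha> ^ L / 2"
  define B where "B = (\<Sum>k\<le>L. \<bar>x k\<bar>)"
  have "\<bar>x k\<bar> \<le> 2 * B * \<theta> ^ (k div Suc L)" for k
  proof -
    have "- B \<le> x k \<and> x k \<le> B" if "k \<le> L" for k
      unfolding B_def using that member_le_sum[of k "{..L}" "\<lambda>k. \<bar>x k\<bar>"]
      by (simp add: abs_le_iff)
    then obtain m M where osc: "M - m \<le> \<theta> ^ (k div Suc L) * (B - - B)"
      and window: "\<And>i. k div Suc L * Suc L \<le> i \<Longrightarrow> i \<le> k div Suc L * Suc L + L \<Longrightarrow> m \<le> x i \<and> x i \<le> M"
      using block_oscillation[of "- B" B "k div Suc L"] unfolding \<theta>_def by blast
    have "m \<le> x k \<and> x k \<le> M"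
      using window[of k] div_mult_mod_eq[of k "Suc L"] mod_less_divisor[of "Suc L" k] by linarith
    moreover have "m \<le> 0 \<and> 0 \<le> M"
      using window_recurrence_straddles_zero[OF rec \<open>L > 0\<close> \<open>a \<le> 0\<close> window] .
    ultimately show ?thesis using osc by (auto simp: abs_le_iff mult_ac)
  qed
  moreover have "0 < \<theta>" "\<theta> < 1"
    using \<alpha> power_le_one[of \<alpha> L] by (simp_all add: \<theta>_def)
  ultimately show ?thesis using exp_decay_of_block_decay[of "Suc L"] by blast
qed

text \<open>For \<open>a = -1\<close> (that is \<open>p = 0\<close>) the maximum over a window need not shrink: a constant
  window is followed by its negative. This case needs the oscillation argument.\<close>

lemma exp_decay_of_window_recurrence:
  fixes x :: "nat \<Rightarrow> real"
  assumes "L \<ge> 2" "- 1 \<le> a" "a < 1"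
    and rec: "\<And>n. n \<ge> L \<Longrightarrow> x n = a / real L * (\<Sum>j=1..L. x (n - j))"
  shows "\<exists>C r. 0 \<le> r \<and> r < 1 \<and> (\<forall>n. \<bar>x n\<bar> \<le> C * r ^ n)"
proof (cases "\<bar>a\<bar> < 1")
  case True
  then show ?thesis using exp_decay_of_contractive_recurrence[OF _ True rec] assms(1) by simp
next
  case False
  then have "a = - 1" using assms(2,3) by simp
  then show ?thesis using exp_decay_of_nonpositive_recurrence[OF rec] assms(1) by simp
qed

section \<open>The autocorrelation \<open>\<rho>\<close>\<close>

lemma sum_window_reindex:
  fixes f :: "nat \<Rightarrow> 'a :: comm_monoid_add"
  assumes "L \<le> n"
  shows "(\<Sum>i<L. f (n - L + i)) = (\<Sum>j=1..L. f (n - j))"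
proof -
  have "(\<Sum>i<L. f (n - L + i)) = (\<Sum>i<L. f (n - L + (L - Suc i)))"
    by (rule sum.nat_diff_reindex[symmetric])
  also have "\<dots> = (\<Sum>i<L. f (n - Suc i))"
    using assms by (intro sum.cong) auto
  finally show ?thesis by (simp add: sum.atLeast1_atMost_eq)
qed

lemma rho_0:
  assumes "0 \<le> p" "p < 1" "L > 0"
  shows "rho L p 0 = 1/2"
proof -
  have "corr L p 0 0 = (\<Sum>\<omega>\<in>Omega L. stat L p \<omega> * of_bool (\<omega> ! 0))"
    unfolding corr_0 by (intro sum.cong) auto
  then show ?thesis using sum_stat_first_site[OF assms] by (simp add: rho_eq_corr)
qed

lemma rho_eq_rho_1:
  assumes "0 < n" "n < L"
  shows "rho L p n = rho L p 1"
  using corr_eq_rho[of n L p 0] corr_eq_rho[of 1 L p 0] sum_stat_pair_exchange[of n L 1 p] assms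
  by (simp add: corr_0)

lemma rho_recurrence:
  assumes "0 \<le> p" "p < 1" "L \<le> n" "L > 0"
  shows "rho L p n = (1 - p) / 2 + (2 * p - 1) / real L * (\<Sum>j=1..L. rho L p (n - j))"
proof -
  have "rho L p n = corr L p (Suc (n - L)) (L - 1)"
    using corr_eq_rho[of "L - 1" L p "Suc (n - L)"] assms by simp
  also have "\<dots> = (1 - p) / 2 + (2 * p - 1) / real L * (\<Sum>i<L. rho L p (n - L + i))"
    using corr_Suc_last[OF assms(1,2,4)] corr_eq_rho[of _ L p "n - L"] by simp
  finally show ?thesis unfolding sum_window_reindex[OF assms(3)] .
qed

lemma rhobar_recurrence:
  assumes "0 \<le> p" "p < 1" "L \<le> n" "L > 0"
  shows "rhobar L p n = (2 * p - 1) / real L * (\<Sum>j=1..L. rhobar L p (n - j))"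
proof -
  define S where "S = (\<Sum>j=1..L. rho L p (n - j))"
  define X where "X = (2 * p - 1) / real L * S"
  have "rho L p n = (1 - p) / 2 + X" using rho_recurrence[OF assms] unfolding X_def S_def .
  then have "rhobar L p n = X - (2 * p - 1) / 4" unfolding rhobar_def by (simp add: field_simps)
  also have "\<dots> = (2 * p - 1) / real L * S - (2 * p - 1) / 4" unfolding X_def ..
  also have "\<dots> = (2 * p - 1) / real L * (S - real L / 4)"
    using \<open>L > 0\<close> by (simp add: right_diff_distrib)
  also have "S - real L / 4 = (\<Sum>j=1..L. rhobar L p (n - j))"
    by (simp add: S_def rhobar_def sum_subtractf)
  finally show ?thesis .
qed

theorem mainTheorem15:
  fixes L :: nat and p :: real
  assumes "L \<ge> 2" and "0 \<le> p" and "p < 1"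
  shows "rho L p 0 = 1/2
    \<and> (\<forall>n\<in>{1..L-1}. rho L p n = rho L p 1)
    \<and> (\<forall>n\<ge>L. rhobar L p n = (2*p - 1) / real L * (\<Sum>j=1..L. rhobar L p (n - j)))
    \<and> (\<exists>C r. 0 \<le> r \<and> r < 1 \<and> (\<forall>n. \<bar>rhobar L p n\<bar> \<le> C * r ^ n))"
proof (intro conjI ballI allI impI)
  have "L > 0" using assms(1) by simp
  show "rho L p 0 = 1/2" using rho_0[OF assms(2,3) \<open>L > 0\<close>] .
  show "rho L p n = rho L p 1" if "n \<in> {1..L-1}" for n
    using that \<open>L > 0\<close> by (intro rho_eq_rho_1) auto
  show rec: "rhobar L p n = (2*p - 1) / real L * (\<Sum>j=1..L. rhobar L p (n - j))" if "n \<ge> L" for n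
    using rhobar_recurrence[OF assms(2,3) that \<open>L > 0\<close>] by simp
  show "\<exists>C r. 0 \<le> r \<and> r < 1 \<and> (\<forall>n. \<bar>rhobar L p n\<bar> \<le> C * r ^ n)"
    using exp_decay_of_window_recurrence[OF assms(1) _ _ rec] assms(2,3) by simp
qed

end
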